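(* Let $L$ be a subspace of $\bigwedge^kV$ and $1\leq i<j\leq n$. Then $N_{j\to i}L$ is monomial with respect to $e_j$, i.e. \[ N_{j\to i}L=\Big(N_{j\to i}L\cap\bigwedge^{k}V^{(j)}\Big)\oplus\Big(N_{j\to i}L\cap\big(e_{j}\wedge\bigwedge^{k-1}V^{(j)}\big)\Big). \]
   Context: $\mathbb{F}$ is a field (assumed throughout the paper, for expository purposes, to have characteristic not $2$), $V$ is an $n$-dimensional $\mathbb{F}$-vector space with a fixed basis $e_1,\dots,e_n$, and $\bigwedge V$ its exterior algebra. For $j\in[n]$, $V^{(j)}$ is the span of $\{e_h:h\neq j\}$, and $\bigwedge V^{(j)}$ is viewed as a subalgebra of $\bigwedge V$. Slow shift: for distinct $i,j\in[n]$ and nonzero $m\in\bigwedge^kV$, write uniquely $m=x+e_j\wedge y$ with $x\in\bigwedge^kV^{(j)}$, $y\in\bigwedge^{k-1}V^{(j)}$, and set $N_{j\to i}m=x+e_i\wedge y$ if this is nonzero, and $N_{j\to i}m=e_j\wedge y$ otherwise (the limit as $t\to0$ of the projective action of the linear map $e_j\mapsto e_i+te_j$ fixing the other $e_h$). For a subspace $L$ of $\bigwedge^kV$, $N_{j\to i}L$ is the span of $\{N_{j\to i}m:m\in L\setminus\{0\}\}$; it has the same dimension as $L$. *)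

theory Defs
  imports Complex_Main "HOL-Library.Function_Algebras"
begin

text \<open>Model of the exterior algebra of V = F^n with basis e_1,...,e_n.
  An element of the k-th exterior power is a coefficient function on subsets of
  {1..n}: m S is the coefficient of e_S = e_{s_1} wedge ... wedge e_{s_k}
  (s_1 < ... < s_k).\<close>

definition scl :: "'a::field \<Rightarrow> (nat set \<Rightarrow> 'a) \<Rightarrow> (nat set \<Rightarrow> 'a)" where
  "scl c f = (\<lambda>S. c * f S)"

definition ext :: "nat \<Rightarrow> nat \<Rightarrow> (nat set \<Rightarrow> 'a::field) set" where
  "ext n k = {f. \<forall>S. f S \<noteq> 0 \<longrightarrow> S \<subseteq> {1..n} \<and> card S = k}"

text \<open>the k-th exterior power of V^(j) = span of e_h, h /= j\<close>
definition extj :: "nat \<Rightarrow> nat \<Rightarrow> nat \<Rightarrow> (nat set \<Rightarrow> 'a::field) set" where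
  "extj n j k = {f \<in> ext n k. \<forall>S. j \<in> S \<longrightarrow> f S = 0}"

text \<open>sign of e_i wedge e_T = sgn_ins i T * e_(T \<union> {i}) for i not in T\<close>
definition sgn_ins :: "nat \<Rightarrow> nat set \<Rightarrow> 'a::field" where
  "sgn_ins i T = (-1) ^ card {t \<in> T. t < i}"

text \<open>left multiplication by e_i\<close>
definition wedge_e :: "nat \<Rightarrow> (nat set \<Rightarrow> 'a::field) \<Rightarrow> (nat set \<Rightarrow> 'a)" where
  "wedge_e i y = (\<lambda>S. if i \<in> S then sgn_ins i (S - {i}) * y (S - {i}) else 0)"

definition ej_part :: "nat \<Rightarrow> nat \<Rightarrow> nat \<Rightarrow> (nat set \<Rightarrow> 'a::field) set" where
  "ej_part n j k = (if k = 0 then {0} else wedge_e j ` extj n j (k - 1))"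

text \<open>the unique decomposition m = x + e_j wedge y with x, y free of e_j\<close>
definition xpart :: "nat \<Rightarrow> (nat set \<Rightarrow> 'a::field) \<Rightarrow> (nat set \<Rightarrow> 'a)" where
  "xpart j m = (\<lambda>S. if j \<in> S then 0 else m S)"

definition ypart :: "nat \<Rightarrow> (nat set \<Rightarrow> 'a::field) \<Rightarrow> (nat set \<Rightarrow> 'a)" where
  "ypart j m = (\<lambda>T. if j \<in> T then 0 else sgn_ins j T * m (insert j T))"

definition slow_shift :: "nat \<Rightarrow> nat \<Rightarrow> (nat set \<Rightarrow> 'a::field) \<Rightarrow> (nat set \<Rightarrow> 'a)" where
  "slow_shift j i m =
     (let x = xpart j m; y = ypart j m; r = x + wedge_e i y
      in if r \<noteq> 0 then r else wedge_e j y)"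

definition slow_shift_space :: "nat \<Rightarrow> nat \<Rightarrow> (nat set \<Rightarrow> 'a::field) set \<Rightarrow> (nat set \<Rightarrow> 'a) set" where
  "slow_shift_space j i L = module.span scl (slow_shift j i ` (L - {0}))"


end

theory Submission
  imports Defs
begin

text \<open>Write \<open>m = x + e\<^sub>j \<and> y\<close> with \<open>x, y\<close> free of \<open>e\<^sub>j\<close>. The shift \<open>N\<^sub>j\<^sub>\<rightarrow>\<^sub>i m\<close> is either
  \<open>x + e\<^sub>i \<and> y\<close>, which is again free of \<open>e\<^sub>j\<close> because \<open>i \<noteq> j\<close>, or \<open>e\<^sub>j \<and> y\<close>. Hence
  \<open>N\<^sub>j\<^sub>\<rightarrow>\<^sub>i L\<close> is spanned by vectors each lying in one of two subspaces \<open>A\<close>, \<open>B\<close> with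
  \<open>A \<inter> B = 0\<close>, and such a span is the direct sum of its intersections with \<open>A\<close> and \<open>B\<close>.\<close>

lemma (in module) span_eq_sums_of_Int:
  assumes "subspace A" "subspace B" "G \<subseteq> A \<union> B"
  shows "span G = {a + b | a b. a \<in> span G \<inter> A \<and> b \<in> span G \<inter> B}"
proof
  show "span G \<subseteq> {a + b | a b. a \<in> span G \<inter> A \<and> b \<in> span G \<inter> B}"
  proof
    fix x
    assume "x \<in> span G"
    moreover have "(G \<inter> A) \<union> (G \<inter> B) = G"
      using assms(3) by blast
    ultimately have "x \<in> span ((G \<inter> A) \<union> (G \<inter> B))"
      by simp
    then obtain a b where "x = a + b" "a \<in> span (G \<inter> A)" "b \<in> span (G \<inter> B)"
      unfolding span_Un by blast
    moreover have "span (G \<inter> A) \<subseteq> span G \<inter> A" "span (G \<inter> B) \<subseteq> span G \<inter> B"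
      using assms by (simp_all add: span_minimal span_mono subspace_inter span_superset le_infI2)
    ultimately show "x \<in> {a + b | a b. a \<in> span G \<inter> A \<and> b \<in> span G \<inter> B}"
      by blast
  qed
  show "{a + b | a b. a \<in> span G \<inter> A \<and> b \<in> span G \<inter> B} \<subseteq> span G"
    by (auto intro: span_add)
qed

interpretation scl_mod: module "scl :: 'a::field \<Rightarrow> (nat set \<Rightarrow> 'a) \<Rightarrow> _"
  by unfold_locales (auto simp: scl_def fun_eq_iff algebra_simps)

lemma module_hom_wedge_e: "module_hom scl scl (wedge_e i :: (nat set \<Rightarrow> 'a::field) \<Rightarrow> _)"
  by (rule module_hom_iff[THEN iffD2])
    (auto simp: wedge_e_def scl_def fun_eq_iff algebra_simps scl_mod.module_axioms)

lemma subspace_supported_in: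
  "scl_mod.subspace {f :: nat set \<Rightarrow> 'a::field. \<forall>S. f S \<noteq> 0 \<longrightarrow> P S}"
  by (rule scl_mod.subspaceI) (auto simp: scl_def, metis add.left_neutral)

lemma extj_iff:
  "f \<in> extj n j k \<longleftrightarrow> (\<forall>S. f S \<noteq> 0 \<longrightarrow> S \<subseteq> {1..n} \<and> card S = k \<and> j \<notin> S)"
  by (auto simp: extj_def ext_def)

lemma subspace_extj: "scl_mod.subspace (extj n j k :: (nat set \<Rightarrow> 'a::field) set)"
proof -
  have extj_eq: "extj n j k = {f. \<forall>S. f S \<noteq> 0 \<longrightarrow> S \<subseteq> {1..n} \<and> card S = k \<and> j \<notin> S}"
    by (rule set_eqI) (simp only: extj_iff mem_Collect_eq)
  show ?thesis
    unfolding extj_eq by (rule subspace_supported_in)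
qed

lemma subspace_ej_part: "scl_mod.subspace (ej_part n j k :: (nat set \<Rightarrow> 'a::field) set)"
  by (simp add: ej_part_def module_hom.subspace_image[OF module_hom_wedge_e] subspace_extj)

lemma extj_Int_ej_part: "extj n j k \<inter> ej_part n j k = {0 :: nat set \<Rightarrow> 'a::field}"
proof -
  have "f S = 0" if "f \<in> extj n j k" "f \<in> ej_part n j k" for f :: "nat set \<Rightarrow> 'a" and S
    using that by (cases "j \<in> S") (auto simp: extj_iff ej_part_def wedge_e_def split: if_splits)
  moreover have "0 \<in> extj n j k \<inter> ej_part n j k"
    by (simp add: scl_mod.subspace_0 subspace_extj subspace_ej_part)
  ultimately show ?thesis
    by (auto simp: fun_eq_iff)
qed

lemma xpart_mem_extj: "m \<in> ext n k \<Longrightarrow> xpart j m \<in> extj n j k"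
  by (auto simp: extj_iff ext_def xpart_def)

lemma ypart_mem_extj:
  assumes "m \<in> ext n (Suc k)"
  shows "ypart j m \<in> extj n j k"
proof -
  have "T \<subseteq> {1..n} \<and> card T = k \<and> j \<notin> T" if "ypart j m T \<noteq> 0" for T
  proof -
    have "j \<notin> T" "m (insert j T) \<noteq> 0"
      using that by (auto simp: ypart_def split: if_splits)
    moreover from this have "insert j T \<subseteq> {1..n}" "card (insert j T) = Suc k"
      using assms by (auto simp: ext_def)
    moreover from this have "finite T"
      using finite_subset by auto
    ultimately show ?thesis
      by simp
  qed
  then show ?thesis
    by (simp add: extj_iff)
qed

lemma ypart_ext_0: "m \<in> ext n 0 \<Longrightarrow> ypart j m = 0"
  by (auto simp: ypart_def ext_def fun_eq_iff)
    (metis card_0_eq finite_atLeastAtMost finite_subset insert_not_empty)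

lemma wedge_e_mem_extj:
  assumes "y \<in> extj n j k" "i \<in> {1..n}" "i \<noteq> j"
  shows "wedge_e i y \<in> extj n j (Suc k)"
proof -
  have "S \<subseteq> {1..n} \<and> card S = Suc k \<and> j \<notin> S" if "wedge_e i y S \<noteq> 0" for S
  proof -
    have "i \<in> S" "y (S - {i}) \<noteq> 0"
      using that by (auto simp: wedge_e_def split: if_splits)
    moreover from this have "S - {i} \<subseteq> {1..n}" "card (S - {i}) = k" "j \<notin> S - {i}"
      using assms(1) by (auto simp: extj_iff)
    moreover from this have "finite S"
      by (metis finite_Diff2 finite.emptyI finite_insert finite_atLeastAtMost finite_subset)
    ultimately show ?thesis
      using assms(2,3) card_Suc_Diff1[of S i] by auto
  qed
  then show ?thesis
    by (simp add: extj_iff)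
qed

lemma slow_shift_mem_extj_or_ej_part:
  assumes "m \<in> ext n k" "i \<in> {1..n}" "i \<noteq> j"
  shows "slow_shift j i m \<in> extj n j k \<union> ej_part n j k"
proof (cases k)
  case 0
  then have "ypart j m = 0"
    using assms(1) by (simp add: ypart_ext_0)
  then have "slow_shift j i m \<in> {xpart j m, 0}"
    by (simp add: slow_shift_def Let_def module_hom.zero[OF module_hom_wedge_e])
  then show ?thesis
    using xpart_mem_extj[OF assms(1)] scl_mod.subspace_0[OF subspace_extj] by auto
next
  case (Suc k')
  have y: "ypart j m \<in> extj n j k'"
    using assms(1) Suc by (simp add: ypart_mem_extj)
  have "xpart j m + wedge_e i (ypart j m) \<in> extj n j k"
    using scl_mod.subspace_add[OF subspace_extj xpart_mem_extj[OF assms(1)]]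
      wedge_e_mem_extj[OF y assms(2,3)] Suc by simp
  moreover have "wedge_e j (ypart j m) \<in> ej_part n j k"
    using y Suc by (simp add: ej_part_def)
  ultimately show ?thesis
    by (simp add: slow_shift_def Let_def)
qed

theorem lemma3p3:
  fixes L :: "(nat set \<Rightarrow> 'a::field) set" and n k i j :: nat
  assumes char_not_2: "(2::'a) \<noteq> 0"
    and subsp: "module.subspace scl L"
    and L_sub: "L \<subseteq> ext n k"
    and ij: "1 \<le> i" "i < j" "j \<le> n"
  shows "slow_shift_space j i L =
           {a + b | a b. a \<in> slow_shift_space j i L \<inter> extj n j k
                      \<and> b \<in> slow_shift_space j i L \<inter> ej_part n j k}
         \<and> slow_shift_space j i L \<inter> extj n j k \<inter> ej_part n j k = {0}"
proof
  have "slow_shift j i m \<in> extj n j k \<union> ej_part n j k" if "m \<in> L" for m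
    using L_sub ij that by (intro slow_shift_mem_extj_or_ej_part) auto
  then have "slow_shift j i ` (L - {0}) \<subseteq> extj n j k \<union> ej_part n j k"
    by blast
  then show "slow_shift_space j i L =
      {a + b | a b. a \<in> slow_shift_space j i L \<inter> extj n j k
                 \<and> b \<in> slow_shift_space j i L \<inter> ej_part n j k}"
    unfolding slow_shift_space_def
    by (rule scl_mod.span_eq_sums_of_Int[OF subspace_extj subspace_ej_part])
  have "0 \<in> slow_shift_space j i L"
    by (simp add: slow_shift_space_def scl_mod.span_zero)
  then show "slow_shift_space j i L \<inter> extj n j k \<inter> ej_part n j k = {0}"
    using extj_Int_ej_part[of n j k] by auto
qed

end
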